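(* Let $G$ be a connected (claw, bull)-free graph and let $C$ be an induced cycle of $G$ of length $k\ge 6$. Then $G$ is an expansion of $C$.
   Context: A claw is a graph isomorphic to $K_{1,3}$; a bull is the graph obtained from a triangle by adding two pendant edges at two different vertices. A graph is (claw, bull)-free if it has no induced claw and no induced bull. An expansion of a graph $F$ with vertex set $\{v_1,\dots,v_n\}$ is any graph obtained from $F$ by replacing each vertex $v_i$ by a nonempty clique $K^{[i]}$, the cliques being pairwise vertex-disjoint, and adding all edges between $V(K^{[i]})$ and $V(K^{[j]})$ whenever $v_iv_j\in E(F)$ (and no other edges between different cliques). *)

theory Defs
  imports Main
begin

definition graph :: "'a set \<Rightarrow> ('a \<Rightarrow> 'a \<Rightarrow> bool) \<Rightarrow> bool" where
  "graph V E \<longleftrightarrow> finite V \<and> (\<forall>x y. E x y \<longrightarrow> x \<in> V \<and> y \<in> V) \<and>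
     (\<forall>x y. E x y \<longrightarrow> E y x) \<and> (\<forall>x. \<not> E x x)"

definition connected_graph :: "'a set \<Rightarrow> ('a \<Rightarrow> 'a \<Rightarrow> bool) \<Rightarrow> bool" where
  "connected_graph V E \<longleftrightarrow> V \<noteq> {} \<and>
     (\<forall>u\<in>V. \<forall>v\<in>V. (\<lambda>x y. E x y \<and> x \<in> V \<and> y \<in> V)\<^sup>*\<^sup>* u v)"

definition has_induced_claw :: "'a set \<Rightarrow> ('a \<Rightarrow> 'a \<Rightarrow> bool) \<Rightarrow> bool" where
  "has_induced_claw V E \<longleftrightarrow> (\<exists>a\<in>V. \<exists>b\<in>V. \<exists>c\<in>V. \<exists>d\<in>V.
     distinct [a, b, c, d] \<and> E a b \<and> E a c \<and> E a d \<and>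
     \<not> E b c \<and> \<not> E b d \<and> \<not> E c d)"

definition has_induced_bull :: "'a set \<Rightarrow> ('a \<Rightarrow> 'a \<Rightarrow> bool) \<Rightarrow> bool" where
  "has_induced_bull V E \<longleftrightarrow> (\<exists>a\<in>V. \<exists>b\<in>V. \<exists>c\<in>V. \<exists>d\<in>V. \<exists>e\<in>V.
     distinct [a, b, c, d, e] \<and> E a b \<and> E b c \<and> E a c \<and> E a d \<and> E b e \<and>
     \<not> E d b \<and> \<not> E d c \<and> \<not> E d e \<and> \<not> E e a \<and> \<not> E e c)"

definition claw_bull_free :: "'a set \<Rightarrow> ('a \<Rightarrow> 'a \<Rightarrow> bool) \<Rightarrow> bool" where
  "claw_bull_free V E \<longleftrightarrow> \<not> has_induced_claw V E \<and> \<not> has_induced_bull V E"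

definition induced_cycle :: "'a set \<Rightarrow> ('a \<Rightarrow> 'a \<Rightarrow> bool) \<Rightarrow> 'a list \<Rightarrow> bool" where
  "induced_cycle V E cs \<longleftrightarrow> length cs \<ge> 3 \<and> distinct cs \<and> set cs \<subseteq> V \<and>
     (\<forall>i<length cs. \<forall>j<length cs.
        E (cs ! i) (cs ! j) \<longleftrightarrow> (j = Suc i mod length cs \<or> i = Suc j mod length cs))"

text \<open>(V,E) is an expansion of (VF,EF): there is a surjection f from V onto VF whose
  fibres are the (nonempty) cliques K^{[v]}, with distinct vertices u, w adjacent iff
  they lie in the same clique or in cliques of adjacent vertices of F.\<close>
definition is_expansion ::
  "'a set \<Rightarrow> ('a \<Rightarrow> 'a \<Rightarrow> bool) \<Rightarrow> 'b set \<Rightarrow> ('b \<Rightarrow> 'b \<Rightarrow> bool) \<Rightarrow> bool" where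
  "is_expansion V E VF EF \<longleftrightarrow> (\<exists>f. f ` V = VF \<and>
     (\<forall>u\<in>V. \<forall>w\<in>V. u \<noteq> w \<longrightarrow> (E u w \<longleftrightarrow> f u = f w \<or> EF (f u) (f w))))"

end

theory Submission
  imports Defs
begin

(* Write c_0, ..., c_{k-1} for the cycle. A vertex v off the cycle with a neighbour on it is a
   "clone" of some c_a: its neighbours on the cycle are exactly c_{a-1}, c_a, c_{a+1}. Indeed v
   cannot see all of c_0, c_2, c_4 (claw), so v sees some c_i but not c_{i-1}; forbidding a claw at
   c_i and two bulls forces v to see c_{i+1}, c_{i+2} and not c_{i+3}, and a claw at v excludes
   every further neighbour. Two clones are adjacent iff their indices are equal or consecutive,
   again by excluding claws and bulls. Replacing c_a by a clone of c_a gives another induced cycle,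
   so by walking along a path every vertex of a connected graph lies on the cycle or is a clone;
   mapping each clone of c_a to c_a exhibits the graph as an expansion of the cycle. *)

definition cyc_suc :: "nat \<Rightarrow> nat \<Rightarrow> nat" where
  "cyc_suc k i = (if Suc i = k then 0 else Suc i)"

definition cyc_pred :: "nat \<Rightarrow> nat \<Rightarrow> nat" where
  "cyc_pred k i = (if i = 0 then k - 1 else i - 1)"

lemma cyc_suc_less [simp]: "i < k \<Longrightarrow> cyc_suc k i < k"
  by (simp add: cyc_suc_def)

lemma cyc_pred_less [simp]: "i < k \<Longrightarrow> cyc_pred k i < k"
  by (auto simp: cyc_pred_def)

lemma cyc_suc_eq_mod: "i < k \<Longrightarrow> cyc_suc k i = Suc i mod k"
  by (simp add: cyc_suc_def)

lemma eq_cyc_pred_iff: "i < k \<Longrightarrow> j < k \<Longrightarrow> j = cyc_pred k i \<longleftrightarrow> i = cyc_suc k j"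
  by (auto simp: cyc_suc_def cyc_pred_def)

lemma cyc_suc_cyc_pred [simp]: "i < k \<Longrightarrow> cyc_suc k (cyc_pred k i) = i"
  by (auto simp: cyc_suc_def cyc_pred_def)

lemma cyc_suc_eq_cyc_suc_iff [simp]:
  "i < k \<Longrightarrow> j < k \<Longrightarrow> cyc_suc k i = cyc_suc k j \<longleftrightarrow> i = j"
  by (auto simp: cyc_suc_def)

lemma cyc_pred_eq_cyc_pred_iff [simp]:
  "i < k \<Longrightarrow> j < k \<Longrightarrow> cyc_pred k i = cyc_pred k j \<longleftrightarrow> i = j"
  by (auto simp: cyc_pred_def)

lemma cyclic_sign_change:
  assumes "i < k" "P i" "j < k" "\<not> P j"
  shows "\<exists>a<k. P a \<and> \<not> P (cyc_pred k a)"
proof (rule ccontr)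
  assume "\<not> ?thesis"
  then have closed: "\<And>a. a < k \<Longrightarrow> P a \<Longrightarrow> P (cyc_pred k a)" by blast
  have down: "P n" if "m < k" "P m" "n \<le> m" for m n
    using that
  proof (induction m arbitrary: n)
    case (Suc m)
    then have "P m" using closed[of "Suc m"] by (simp add: cyc_pred_def)
    with Suc show ?case by (cases "n = Suc m") auto
  qed simp
  have "P 0" using down assms(1,2) by blast
  then have "P (k - 1)" using closed[of 0] assms(1) by (simp add: cyc_pred_def)
  moreover have "j \<le> k - 1" "k - 1 < k" using assms by auto
  ultimately show False using down[of "k - 1" j] assms by blast
qed

locale long_induced_cycle =
  fixes V :: "'a set" and E :: "'a \<Rightarrow> 'a \<Rightarrow> bool" and cs :: "'a list"
  assumes graph: "graph V E"
    and claw_bull_free: "claw_bull_free V E"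
    and induced_cycle: "induced_cycle V E cs"
    and six_le_length: "6 \<le> length cs"
begin

lemma adj_sym: "E x y \<longleftrightarrow> E y x"
  using graph unfolding graph_def by blast

lemma not_adj_self [simp]: "\<not> E x x"
  using graph unfolding graph_def by blast

lemma adj_in_vertices: "E x y \<Longrightarrow> x \<in> V" "E x y \<Longrightarrow> y \<in> V"
  using graph unfolding graph_def by blast+

lemma cycle_nonempty [simp]: "cs \<noteq> []"
  using six_le_length by auto

lemma nth_cycle_in_vertices [simp]: "i < length cs \<Longrightarrow> cs ! i \<in> V"
  using induced_cycle nth_mem unfolding induced_cycle_def by blast

lemma nth_cycle_eq_iff [simp]:
  "i < length cs \<Longrightarrow> j < length cs \<Longrightarrow> cs ! i = cs ! j \<longleftrightarrow> i = j"
  using induced_cycle nth_eq_iff_index_eq unfolding induced_cycle_def by blast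

lemma adj_cycle_iff [simp]:
  "i < length cs \<Longrightarrow> j < length cs \<Longrightarrow>
    E (cs ! i) (cs ! j) \<longleftrightarrow> j = cyc_suc (length cs) i \<or> i = cyc_suc (length cs) j"
  using induced_cycle unfolding induced_cycle_def by (simp add: cyc_suc_eq_mod)

lemma nth_cycle_neq_outside [simp]:
  "v \<notin> set cs \<Longrightarrow> i < length cs \<Longrightarrow> cs ! i \<noteq> v"
  "v \<notin> set cs \<Longrightarrow> i < length cs \<Longrightarrow> v \<noteq> cs ! i"
  using nth_mem by blast+

lemma no_claw:
  "distinct [a, b, c, d] \<Longrightarrow> E a b \<Longrightarrow> E a c \<Longrightarrow> E a d \<Longrightarrow>
    \<not> E b c \<Longrightarrow> \<not> E b d \<Longrightarrow> \<not> E c d \<Longrightarrow> False"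
  using claw_bull_free adj_in_vertices
  unfolding claw_bull_free_def has_induced_claw_def by blast

lemma no_bull:
  "distinct [a, b, c, d, e] \<Longrightarrow> E a b \<Longrightarrow> E b c \<Longrightarrow> E a c \<Longrightarrow> E a d \<Longrightarrow> E b e \<Longrightarrow>
    \<not> E d b \<Longrightarrow> \<not> E d c \<Longrightarrow> \<not> E d e \<Longrightarrow> \<not> E e a \<Longrightarrow> \<not> E e c \<Longrightarrow> False"
  using claw_bull_free adj_in_vertices
  unfolding claw_bull_free_def has_induced_bull_def by blast

definition clone_of :: "'a \<Rightarrow> nat \<Rightarrow> bool" where
  "clone_of v a \<longleftrightarrow> a < length cs \<and> v \<in> V \<and> v \<notin> set cs \<and>
     (\<forall>j<length cs. E v (cs ! j) \<longleftrightarrow>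
        j = cyc_pred (length cs) a \<or> j = a \<or> j = cyc_suc (length cs) a)"

lemma clone_ofD: "clone_of v a \<Longrightarrow> a < length cs \<and> v \<in> V \<and> v \<notin> set cs"
  unfolding clone_of_def by blast

lemma clone_of_adj_iff:
  assumes "clone_of v a" "j < length cs"
  shows "E v (cs ! j) \<longleftrightarrow> j = cyc_pred (length cs) a \<or> j = a \<or> j = cyc_suc (length cs) a"
    and "E (cs ! j) v \<longleftrightarrow> j = cyc_pred (length cs) a \<or> j = a \<or> j = cyc_suc (length cs) a"
  using assms adj_sym unfolding clone_of_def by blast+

lemma not_adj_whole_cycle:
  assumes "v \<notin> set cs"
  shows "\<exists>m<length cs. \<not> E v (cs ! m)"
proof (rule ccontr)
  assume "\<not> ?thesis"
  moreover have "0 < length cs" "2 < length cs" "4 < length cs" using six_le_length by auto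
  ultimately have "E v (cs ! 0)" "E v (cs ! 2)" "E v (cs ! 4)" by blast+
  moreover have "distinct [v, cs ! 0, cs ! 2, cs ! 4]"
    and "\<not> E (cs ! 0) (cs ! 2)" "\<not> E (cs ! 0) (cs ! 4)" "\<not> E (cs ! 2) (cs ! 4)"
    using assms six_le_length by (simp_all add: cyc_suc_def)
  ultimately show False using no_claw by blast
qed

lemma clone_of_exists:
  assumes v: "v \<in> V" "v \<notin> set cs" and "i < length cs" "E v (cs ! i)"
  shows "\<exists>a. clone_of v a"
proof -
  let ?k = "length cs"
  obtain a where a: "a < ?k" "E v (cs ! a)" "\<not> E v (cs ! cyc_pred ?k a)"
    using cyclic_sign_change[of i ?k "\<lambda>j. E v (cs ! j)"] not_adj_whole_cycle assms by blast
  define p b c d where "p = cyc_pred ?k a" and "b = cyc_suc ?k a"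
    and "c = cyc_suc ?k b" and "d = cyc_suc ?k c"
  note index_defs = p_def b_def c_def d_def
  have lt: "p < ?k" "b < ?k" "c < ?k" "d < ?k" using a(1) unfolding index_defs by auto
  have "E v (cs ! b)"
  proof (rule ccontr)
    assume "\<not> E v (cs ! b)"
    show False
      by (rule no_claw[of "cs ! a" "cs ! p" "cs ! b" v])
        (use a v lt \<open>\<not> E v (cs ! b)\<close> six_le_length in
          \<open>unfold index_defs, simp_all add: adj_sym[of _ v],
            auto simp: cyc_suc_def cyc_pred_def\<close>)
  qed
  moreover have "E v (cs ! c)"
  proof (rule ccontr)
    assume "\<not> E v (cs ! c)"
    show False
      by (rule no_bull[of "cs ! a" "cs ! b" v "cs ! p" "cs ! c"])
        (use \<open>\<not> E v (cs ! c)\<close> \<open>E v (cs ! b)\<close> a v lt six_le_length in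
          \<open>unfold index_defs, simp_all add: adj_sym[of _ v],
            auto simp: cyc_suc_def cyc_pred_def\<close>)
  qed
  moreover have "\<not> E v (cs ! d)"
  proof
    assume "E v (cs ! d)"
    show False
      by (rule no_bull[of "cs ! a" v "cs ! b" "cs ! p" "cs ! d"])
        (use \<open>E v (cs ! d)\<close> \<open>E v (cs ! b)\<close> a v lt six_le_length in
          \<open>unfold index_defs, simp_all add: adj_sym[of _ v],
            auto simp: cyc_suc_def cyc_pred_def\<close>)
  qed
  moreover have "\<not> E v (cs ! j)" if j: "j < ?k" "j \<notin> {p, a, b, c, d}" for j
  proof
    assume "E v (cs ! j)"
    moreover have "\<not> E (cs ! a) (cs ! j)" "\<not> E (cs ! c) (cs ! j)"
      using j lt a(1) eq_cyc_pred_iff[of a ?k j] eq_cyc_pred_iff[of c ?k j]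
      by (auto simp: index_defs)
    moreover have "\<not> E (cs ! a) (cs ! c)" "distinct [v, cs ! a, cs ! c, cs ! j]"
      using j lt a(1) v six_le_length by (auto simp: index_defs cyc_suc_def)
    ultimately show False
      using no_claw \<open>E v (cs ! c)\<close> a(2) by blast
  qed
  ultimately have "E v (cs ! j) \<longleftrightarrow> j = a \<or> j = b \<or> j = c" if "j < ?k" for j
    using that a(2,3) unfolding p_def by blast
  moreover have "cyc_pred ?k b = a" "cyc_suc ?k b = c"
    using a(1) unfolding b_def c_def by (auto simp: cyc_suc_def cyc_pred_def)
  ultimately have "clone_of v b"
    using lt v unfolding clone_of_def by auto
  then show ?thesis by blast
qed

lemma clones_same_index_adj:
  assumes u: "clone_of u a" and w: "clone_of w a" and "u \<noteq> w"
  shows "E u w"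
proof (rule ccontr)
  assume "\<not> E u w"
  let ?k = "length cs"
  show False
    by (rule no_claw[of "cs ! cyc_pred ?k a" "cs ! cyc_pred ?k (cyc_pred ?k a)" u w])
      (use u w clone_ofD[OF u] clone_ofD[OF w] \<open>u \<noteq> w\<close> \<open>\<not> E u w\<close> adj_sym[of u w] six_le_length in
          \<open>simp_all add: clone_of_adj_iff,
            auto simp: cyc_suc_def cyc_pred_def split: if_splits\<close>)
qed

lemma clones_consecutive_adj:
  assumes u: "clone_of u a" and w: "clone_of w (cyc_suc (length cs) a)" and "u \<noteq> w"
  shows "E u w"
proof (rule ccontr)
  assume "\<not> E u w"
  let ?k = "length cs"
  let ?b = "cyc_suc ?k a"
  show False
    by (rule no_bull[of "cs ! ?b" "cs ! cyc_suc ?k ?b" w u "cs ! cyc_suc ?k (cyc_suc ?k ?b)"])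
      (use u w clone_ofD[OF u] clone_ofD[OF w] \<open>u \<noteq> w\<close> \<open>\<not> E u w\<close> adj_sym[of u w] six_le_length in
          \<open>simp_all add: clone_of_adj_iff,
            auto simp: cyc_suc_def cyc_pred_def split: if_splits\<close>)
qed

lemma clones_distance_two_not_adj:
  assumes u: "clone_of u a" and w: "clone_of w (cyc_suc (length cs) (cyc_suc (length cs) a))"
  shows "\<not> E u w"
proof
  assume "E u w"
  let ?k = "length cs"
  let ?c = "cyc_suc ?k (cyc_suc ?k a)"
  have "u \<noteq> w" using \<open>E u w\<close> by auto
  show False
    by (rule no_bull[of w "cs ! cyc_suc ?k ?c" "cs ! ?c" u "cs ! cyc_suc ?k (cyc_suc ?k ?c)"])
      (use u w clone_ofD[OF u] clone_ofD[OF w] \<open>u \<noteq> w\<close> \<open>E u w\<close> adj_sym[of u w] six_le_length in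
          \<open>simp_all add: clone_of_adj_iff,
            auto simp: cyc_suc_def cyc_pred_def split: if_splits\<close>)
qed

lemma clones_far_not_adj:
  assumes u: "clone_of u a" and w: "clone_of w b"
    and "b \<noteq> a" "b \<noteq> cyc_suc (length cs) a" "a \<noteq> cyc_suc (length cs) b"
      "b \<noteq> cyc_suc (length cs) (cyc_suc (length cs) a)"
      "a \<noteq> cyc_suc (length cs) (cyc_suc (length cs) b)"
  shows "\<not> E u w"
proof
  assume "E u w"
  let ?k = "length cs"
  have ab: "a < ?k" "b < ?k" using clone_ofD u w by blast+
  have "cyc_pred ?k a \<notin> {cyc_pred ?k b, b, cyc_suc ?k b}"
    using assms(3-) ab eq_cyc_pred_iff[of a ?k b] eq_cyc_pred_iff[of a ?k "cyc_suc ?k b"] by auto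
  moreover have "cyc_suc ?k a \<notin> {cyc_pred ?k b, b, cyc_suc ?k b}"
    using assms(3-) ab eq_cyc_pred_iff[of b ?k "cyc_suc ?k a"] by auto
  ultimately have w_far: "\<not> E w (cs ! cyc_pred ?k a)" "\<not> E w (cs ! cyc_suc ?k a)"
    using clone_of_adj_iff(1)[OF w] ab by simp_all
  have "cyc_pred ?k a \<noteq> cyc_suc ?k a" "cyc_pred ?k a \<noteq> cyc_suc ?k (cyc_suc ?k a)"
    "cyc_suc ?k a \<noteq> a"
    using ab six_le_length by (auto simp: cyc_suc_def cyc_pred_def)
  then have "\<not> E (cs ! cyc_pred ?k a) (cs ! cyc_suc ?k a)"
    and "distinct [u, w, cs ! cyc_pred ?k a, cs ! cyc_suc ?k a]"
    using ab clone_ofD[OF u] clone_ofD[OF w] \<open>E u w\<close> by auto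
  moreover have "E u (cs ! cyc_pred ?k a)" "E u (cs ! cyc_suc ?k a)"
    using clone_of_adj_iff(1)[OF u] ab by simp_all
  ultimately show False
    using no_claw \<open>E u w\<close> w_far by blast
qed

lemma clones_adj_iff:
  assumes u: "clone_of u a" and w: "clone_of w b" and "u \<noteq> w"
  shows "E u w \<longleftrightarrow> a = b \<or> b = cyc_suc (length cs) a \<or> a = cyc_suc (length cs) b"
proof
  assume "E u w"
  moreover have "b \<noteq> cyc_suc (length cs) (cyc_suc (length cs) a)"
    using clones_distance_two_not_adj[OF u] w \<open>E u w\<close> by blast
  moreover have "a \<noteq> cyc_suc (length cs) (cyc_suc (length cs) b)"
    using clones_distance_two_not_adj[OF w] u \<open>E u w\<close> adj_sym by blast
  ultimately show "a = b \<or> b = cyc_suc (length cs) a \<or> a = cyc_suc (length cs) b"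
    using clones_far_not_adj[OF u w] by blast
next
  assume "a = b \<or> b = cyc_suc (length cs) a \<or> a = cyc_suc (length cs) b"
  then show "E u w"
    using clones_same_index_adj[OF u, of w] clones_consecutive_adj[OF u, of w]
      clones_consecutive_adj[OF w, of u] u w \<open>u \<noteq> w\<close> adj_sym by blast
qed

(* The bag of a is the clique K^{[a]} of the expansion: c_a together with its clones. *)
definition in_bag :: "'a \<Rightarrow> nat \<Rightarrow> bool" where
  "in_bag v a \<longleftrightarrow> a < length cs \<and> cs ! a = v \<or> clone_of v a"

lemma in_bagD: "in_bag v a \<Longrightarrow> a < length cs \<and> v \<in> V"
  using clone_ofD nth_cycle_in_vertices unfolding in_bag_def by blast

lemma in_bag_nth_iff: "i < length cs \<Longrightarrow> in_bag (cs ! i) a \<longleftrightarrow> a = i"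
  using clone_ofD nth_mem unfolding in_bag_def by fastforce

lemma in_bag_adj_iff:
  assumes u: "in_bag u a" and w: "in_bag w b" and "u \<noteq> w"
  shows "E u w \<longleftrightarrow> a = b \<or> b = cyc_suc (length cs) a \<or> a = cyc_suc (length cs) b"
proof -
  have ab: "a < length cs" "b < length cs" using in_bagD u w by blast+
  consider "u = cs ! a" "w = cs ! b" | "u = cs ! a" "clone_of w b" | "clone_of u a" "w = cs ! b"
    | "clone_of u a" "clone_of w b"
    using u w unfolding in_bag_def by blast
  then show ?thesis
  proof cases
    case 1
    then show ?thesis using ab \<open>u \<noteq> w\<close> by auto
  next
    case 2
    then show ?thesis using clone_of_adj_iff(2)[of w b a] eq_cyc_pred_iff[of b _ a] ab by auto
  next
    case 3
    then show ?thesis using clone_of_adj_iff(1)[of u a b] eq_cyc_pred_iff[of a _ b] ab by auto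
  next
    case 4
    then show ?thesis using clones_adj_iff \<open>u \<noteq> w\<close> by blast
  qed
qed

lemma long_induced_cycle_update_clone:
  assumes v: "clone_of v a"
  shows "long_induced_cycle V E (cs[a := v])"
proof -
  let ?k = "length cs"
  have a: "a < ?k" "v \<in> V" "v \<notin> set cs" using clone_ofD[OF v] by auto
  have "E (cs[a := v] ! i) (cs[a := v] ! j) \<longleftrightarrow> j = cyc_suc ?k i \<or> i = cyc_suc ?k j"
    if ij: "i < ?k" "j < ?k" for i j
  proof (cases "i = a"; cases "j = a")
    assume "i = a" "j \<noteq> a"
    then show ?thesis using a ij clone_of_adj_iff(1)[OF v, of j] eq_cyc_pred_iff[of a ?k j] by auto
  next
    assume "i \<noteq> a" "j = a"
    then show ?thesis using a ij clone_of_adj_iff(2)[OF v, of i] eq_cyc_pred_iff[of a ?k i] by auto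
  qed (use a ij six_le_length in \<open>auto simp: cyc_suc_def\<close>)
  then have "induced_cycle V E (cs[a := v])"
    using induced_cycle a set_update_subset_insert[of cs a v]
    unfolding induced_cycle_def by (auto simp: cyc_suc_eq_mod intro: distinct_list_update)
  then show ?thesis
    using graph claw_bull_free six_le_length by unfold_locales auto
qed

lemma on_or_adj_cycle:
  assumes "connected_graph V E" and "v \<in> V"
  shows "v \<in> set cs \<or> (\<exists>i<length cs. E v (cs ! i))"
proof -
  let ?k = "length cs"
  have "cs ! 0 \<in> V" by (rule nth_cycle_in_vertices) simp
  then have "(\<lambda>x y. E x y \<and> x \<in> V \<and> y \<in> V)\<^sup>*\<^sup>* (cs ! 0) v"
    using assms unfolding connected_graph_def by blast
  then show ?thesis
  proof (induction rule: rtranclp_induct)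
    case base
    then show ?case by simp
  next
    case (step y z)
    then have "E y z" by blast
    show ?case
    proof (rule ccontr)
      assume "\<not> ?case"
      then have z: "z \<notin> set cs" "\<And>i. i < ?k \<Longrightarrow> \<not> E z (cs ! i)" by blast+
      have "y \<notin> set cs"
      proof
        assume "y \<in> set cs"
        then obtain i where "i < ?k" "y = cs ! i" by (metis in_set_conv_nth)
        then show False using z(2)[of i] \<open>E y z\<close> by (simp add: adj_sym)
      qed
      then obtain i where "i < ?k" "E y (cs ! i)" using step.IH by blast
      then obtain a where y: "clone_of y a"
        using clone_of_exists[OF adj_in_vertices(1)[OF \<open>E y z\<close>] \<open>y \<notin> set cs\<close>] by blast
      have a: "a < ?k" using clone_ofD[OF y] by blast
      interpret replaced: long_induced_cycle V E "cs[a := y]"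
        by (rule long_induced_cycle_update_clone[OF y])
      have "z \<notin> set (cs[a := y])"
        using z(1) \<open>E y z\<close> set_update_subset_insert[of cs a y] by auto
      moreover have "E z (cs[a := y] ! a)" using a \<open>E y z\<close> adj_sym by simp
      ultimately have "\<exists>b. replaced.clone_of z b"
        using replaced.clone_of_exists[of z a] adj_in_vertices(2)[OF \<open>E y z\<close>] a by simp
      then obtain b where b: "replaced.clone_of z b" ..
      have "b < ?k" using replaced.clone_ofD[OF b] by simp
      then have "E z (cs[a := y] ! b)" "E z (cs[a := y] ! cyc_suc ?k b)"
        using replaced.clone_of_adj_iff(1)[OF b] by simp_all
      \<comment> \<open>z sees two consecutive vertices of the new cycle, one of which is on the old one\<close>
      moreover have "cyc_suc ?k b \<noteq> b" using six_le_length by (simp add: cyc_suc_def)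
      ultimately have "\<exists>j<?k. j \<noteq> a \<and> E z (cs[a := y] ! j)"
        using \<open>b < ?k\<close> cyc_suc_less[OF \<open>b < ?k\<close>] by (cases "b = a") blast+
      then show False using z(2) by auto
    qed
  qed
qed

lemma ex_in_bag:
  assumes "connected_graph V E" and "v \<in> V"
  shows "\<exists>a. in_bag v a"
proof (cases "v \<in> set cs")
  case True
  then obtain i where "i < length cs" "cs ! i = v" by (metis in_set_conv_nth)
  then show ?thesis unfolding in_bag_def by blast
next
  case False
  then obtain i where "i < length cs" "E v (cs ! i)" using on_or_adj_cycle[OF assms] by blast
  then show ?thesis using clone_of_exists[OF \<open>v \<in> V\<close> False] unfolding in_bag_def by blast
qed

lemma is_expansion_if_in_bags:
  assumes "\<And>v. v \<in> V \<Longrightarrow> \<exists>a. in_bag v a"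
  shows "is_expansion V E (set cs) (\<lambda>x y. E x y \<and> x \<in> set cs \<and> y \<in> set cs)"
proof -
  obtain bag where bag: "\<And>v. v \<in> V \<Longrightarrow> in_bag v (bag v)" using assms by metis
  then have bag_less: "\<And>v. v \<in> V \<Longrightarrow> bag v < length cs" using in_bagD by blast
  have "set cs \<subseteq> (\<lambda>v. cs ! bag v) ` V"
  proof
    fix x assume "x \<in> set cs"
    then obtain i where i: "i < length cs" "x = cs ! i" by (metis in_set_conv_nth)
    then have "x \<in> V" by simp
    moreover have "bag x = i" using bag[OF \<open>x \<in> V\<close>] in_bag_nth_iff i by blast
    ultimately show "x \<in> (\<lambda>v. cs ! bag v) ` V" using i by blast
  qed
  then have "(\<lambda>v. cs ! bag v) ` V = set cs" using bag_less by auto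
  moreover have "E u w \<longleftrightarrow> cs ! bag u = cs ! bag w \<or>
      E (cs ! bag u) (cs ! bag w) \<and> cs ! bag u \<in> set cs \<and> cs ! bag w \<in> set cs"
    if "u \<in> V" "w \<in> V" "u \<noteq> w" for u w
    using in_bag_adj_iff[OF bag bag] that bag_less[of u] bag_less[of w] by simp
  ultimately show ?thesis unfolding is_expansion_def by blast
qed

end

theorem lemma4:
  fixes V :: "'a set" and E :: "'a \<Rightarrow> 'a \<Rightarrow> bool" and cs :: "'a list"
  assumes "graph V E"
    and "connected_graph V E"
    and "claw_bull_free V E"
    and "induced_cycle V E cs"
    and "length cs \<ge> 6"
  shows "is_expansion V E (set cs) (\<lambda>x y. E x y \<and> x \<in> set cs \<and> y \<in> set cs)"
proof -
  interpret long_induced_cycle V E cs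
    using assms by unfold_locales
  show ?thesis
    using is_expansion_if_in_bags ex_in_bag[OF assms(2)] by blast
qed

end
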